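(* Let $X=(X_1,X_2)$ be a nonnegative bivariate random vector with absolutely continuous joint distribution function $F$, support contained in $(0,b_1)\times(0,b_2)$, and marginal densities $f_{X_1},f_{X_2}$. Assume all quantities below are finite. Then $$\overline\varepsilon(X_1,X_2)\ \geq\ \max\left[C_1e^{H(X_1)},\,C_2e^{H(X_2)}\right],$$ where $$C_1=\exp\left[E_{X_1}\left(\log\int_0^{b_2}F(X_1,x_2)\,|\log F(X_1,x_2)|\,dx_2\right)\right],\qquad C_2=\exp\left[E_{X_2}\left(\log\int_0^{b_1}F(x_1,X_2)\,|\log F(x_1,X_2)|\,dx_1\right)\right].$$
   Context: The bivariate cumulative past entropy is $\overline\varepsilon(X_1,X_2)=-\int_0^{b_1}\int_0^{b_2}F(x_1,x_2)\log F(x_1,x_2)\,dx_2\,dx_1$, where $F(x_1,x_2)=P(X_1\le x_1,X_2\le x_2)$ and $0\log0=0$. $H(X_i)=-\int f_{X_i}(x)\log f_{X_i}(x)\,dx$ is the Shannon differential entropy of the marginal $X_i$. $E_{X_i}$ denotes expectation with respect to the distribution of $X_i$. *)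

theory Defs
  imports "HOL-Probability.Probability"
begin

definition jointCDF :: "'a measure \<Rightarrow> ('a \<Rightarrow> real) \<Rightarrow> ('a \<Rightarrow> real) \<Rightarrow> real \<Rightarrow> real \<Rightarrow> real" where
  "jointCDF M X1 X2 x1 x2 = measure M {\<omega> \<in> space M. X1 \<omega> \<le> x1 \<and> X2 \<omega> \<le> x2}"

text \<open>Bivariate cumulative past entropy (natural log; ln 0 = 0 in Isabelle, so 0 log 0 = 0).\<close>
definition bcpe :: "'a measure \<Rightarrow> ('a \<Rightarrow> real) \<Rightarrow> ('a \<Rightarrow> real) \<Rightarrow> real \<Rightarrow> real \<Rightarrow> real" where
  "bcpe M X1 X2 b1 b2 =
     - (\<integral>x1\<in>{0..b1}. (\<integral>x2\<in>{0..b2}. jointCDF M X1 X2 x1 x2 * ln (jointCDF M X1 X2 x1 x2) \<partial>lborel) \<partial>lborel)"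

definition diff_entropy :: "(real \<Rightarrow> real) \<Rightarrow> real" where
  "diff_entropy f = - (\<integral>x. f x * ln (f x) \<partial>lborel)"

end

theory Submission
  imports Defs
begin

text \<open>
  Let \<open>g\<^sub>1 x = \<integral>\<^sub>0\<^sup>b\<^sup>2 F(x,y) |log F(x,y)| dy\<close>. As \<open>F \<le> 1\<close>, the bivariate cumulative
  past entropy equals \<open>\<integral>\<^sub>0\<^sup>b\<^sup>1 g\<^sub>1\<close>, and by Fubini also \<open>\<integral>\<^sub>0\<^sup>b\<^sup>2 g\<^sub>2\<close> with \<open>g\<^sub>2\<close> defined
  symmetrically. Gibbs' inequality for the density of \<open>X\<^sub>1\<close> against the probability
  density \<open>g\<^sub>1 / \<integral>\<^sub>0\<^sup>b\<^sup>1 g\<^sub>1\<close> gives \<open>E log g\<^sub>1(X\<^sub>1) + H(X\<^sub>1) \<le> log \<integral>\<^sub>0\<^sup>b\<^sup>1 g\<^sub>1\<close>, which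
  is the first bound; the second is symmetric. Since \<open>ln 0 = 0\<close> in Isabelle, Gibbs'
  inequality needs \<open>g\<^sub>1(X\<^sub>1) > 0\<close> almost surely; this holds because
  \<open>0 < F(X\<^sub>1, b\<^sub>2) < 1\<close> almost surely, \<open>X\<^sub>1\<close> having no atoms.
\<close>

lemma jointCDF_nonneg: "0 \<le> jointCDF M U V x y"
  unfolding jointCDF_def by simp

lemma jointCDF_le_1: "prob_space M \<Longrightarrow> jointCDF M U V x y \<le> 1"
  unfolding jointCDF_def by (simp add: prob_space.prob_le_1)

lemma jointCDF_swap: "jointCDF M V U y x = jointCDF M U V x y"
  unfolding jointCDF_def by (simp add: conj_commute)

lemma jointCDF_mono:
  assumes "prob_space M" and [measurable]: "U \<in> borel_measurable M" "V \<in> borel_measurable M"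
    and "x \<le> x'" "y \<le> y'"
  shows "jointCDF M U V x y \<le> jointCDF M U V x' y'"
proof -
  interpret prob_space M by fact
  show ?thesis unfolding jointCDF_def
    by (rule finite_measure_mono) (use assms(4,5) in auto)
qed

lemma jointCDF_eq_expectation:
  assumes "prob_space M" and [measurable]: "U \<in> borel_measurable M" "V \<in> borel_measurable M"
  shows "jointCDF M U V x y = (\<integral>\<omega>. (if U \<omega> \<le> x \<and> V \<omega> \<le> y then 1 else 0 :: real) \<partial>M)"
proof -
  interpret prob_space M by fact
  have "jointCDF M U V x y = integral\<^sup>L M (indicator {\<omega>\<in>space M. U \<omega> \<le> x \<and> V \<omega> \<le> y})"
    unfolding jointCDF_def by (simp add: Int_absorb2 subset_iff)
  also have "\<dots> = (\<integral>\<omega>. (if U \<omega> \<le> x \<and> V \<omega> \<le> y then 1 else 0 :: real) \<partial>M)"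
    by (rule Bochner_Integration.integral_cong) (auto simp: indicator_def)
  finally show ?thesis .
qed

lemma borel_measurable_jointCDF:
  assumes "prob_space M" and [measurable]: "U \<in> borel_measurable M" "V \<in> borel_measurable M"
    and [measurable]: "f \<in> borel_measurable N" "g \<in> borel_measurable N"
  shows "(\<lambda>z. jointCDF M U V (f z) (g z)) \<in> borel_measurable N"
proof -
  interpret prob_space M by fact
  show ?thesis
    unfolding jointCDF_eq_expectation[OF assms(1-3)] by measurable
qed

lemma jointCDF_pos_below:
  assumes "prob_space M" and [measurable]: "U \<in> borel_measurable M" "V \<in> borel_measurable M"
    and V_less: "AE \<omega> in M. V \<omega> < c" and pos: "0 < jointCDF M U V x c"
  shows "\<exists>d<c. 0 < jointCDF M U V x d"
proof (rule ccontr)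
  interpret prob_space M by fact
  assume "\<not> (\<exists>d<c. 0 < jointCDF M U V x d)"
  then have zero: "\<P>(\<omega> in M. U \<omega> \<le> x \<and> V \<omega> \<le> d) = 0" if "d < c" for d
    using that jointCDF_nonneg[of M U V x d] unfolding jointCDF_def by (meson antisym not_le)
  have "AE \<omega> in M. \<forall>n::nat. \<not> (U \<omega> \<le> x \<and> V \<omega> \<le> c - 1 / Suc n)"
  proof (subst AE_all_countable, intro allI)
    fix n :: nat
    have "\<P>(\<omega> in M. U \<omega> \<le> x \<and> V \<omega> \<le> c - 1 / Suc n) = 0" by (rule zero) simp
    then show "AE \<omega> in M. \<not> (U \<omega> \<le> x \<and> V \<omega> \<le> c - 1 / Suc n)"
      by (subst (asm) prob_Collect_eq_0) auto
  qed
  with V_less have "AE \<omega> in M. \<not> (U \<omega> \<le> x \<and> V \<omega> \<le> c)"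
  proof eventually_elim
    case (elim \<omega>)
    obtain n :: nat where "1 / Suc n < c - V \<omega>"
      using elim(1) reals_Archimedean[of "c - V \<omega>"] by (auto simp: inverse_eq_divide)
    then have "V \<omega> \<le> c - 1 / Suc n" by simp
    with elim(2) show ?case by blast
  qed
  then have "jointCDF M U V x c = 0"
    unfolding jointCDF_def by (subst prob_Collect_eq_0) auto
  with pos show False by simp
qed

lemma mult_abs_ln_le_one:
  fixes t :: real
  assumes "0 \<le> t" "t \<le> 1"
  shows "t * \<bar>ln t\<bar> \<le> 1"
proof (cases "t = 0")
  case False
  then have t: "0 < t" using assms by simp
  have "- ln t = ln (1 / t)" using t by (simp add: ln_div)
  also have "\<dots> \<le> 1 / t - 1" using t by (intro ln_le_minus_one) auto
  finally have "t * \<bar>ln t\<bar> \<le> t * (1 / t - 1)"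
    using t assms by (intro mult_left_mono) auto
  also have "\<dots> \<le> 1" using t by (simp add: field_simps)
  finally show ?thesis .
qed simp

lemma distributed_AE_neq:
  fixes U :: "'a \<Rightarrow> real"
  assumes distr: "distributed M lborel U (\<lambda>x. ennreal (f x))"
  shows "AE \<omega> in M. U \<omega> \<noteq> t"
proof -
  have Um: "U \<in> measurable M lborel" using distr by (simp add: distributed_def)
  have fm: "(\<lambda>x. ennreal (f x)) \<in> borel_measurable lborel" using distr by (simp add: distributed_def)
  have "AE x in density lborel (\<lambda>x. ennreal (f x)). x \<noteq> t"
    using AE_lborel_singleton[of t] by (subst AE_density[OF fm]) auto
  then have "AE x in distr M lborel U. x \<noteq> t"
    using distributed_distr_eq_density[OF distr] by metis
  then show ?thesis using Um by (subst (asm) AE_distr_iff) auto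
qed

text \<open>
  If \<open>U \<omega> \<in> S\<close> and \<open>U \<omega>\<close> lies above every rational point of \<open>S\<close>, then \<open>U \<omega>\<close>
  is the maximum of \<open>S\<close>; so only countably many null sets and one atom matter.
\<close>
lemma AE_notin_downset:
  fixes U :: "'a \<Rightarrow> real"
  assumes down: "\<And>x y. x \<in> S \<Longrightarrow> y \<le> x \<Longrightarrow> y \<in> S"
    and below: "\<And>x. x \<in> S \<Longrightarrow> AE \<omega> in M. x \<le> U \<omega>"
    and no_atom: "\<And>t. AE \<omega> in M. U \<omega> \<noteq> t"
  shows "AE \<omega> in M. U \<omega> \<notin> S"
proof -
  have "countable (S \<inter> \<rat>)" by (simp add: countable_rat)
  then have "AE \<omega> in M. \<forall>q\<in>S \<inter> \<rat>. q \<le> U \<omega>"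
    using below by (simp add: AE_ball_countable)
  with no_atom[of "Sup S"] show ?thesis
  proof eventually_elim
    case (elim \<omega>)
    show "U \<omega> \<notin> S"
    proof
      assume U: "U \<omega> \<in> S"
      have "y \<le> U \<omega>" if "y \<in> S" for y
      proof (rule ccontr)
        assume "\<not> y \<le> U \<omega>"
        then obtain q where "q \<in> \<rat>" "U \<omega> < q" "q < y"
          using Rats_dense_in_real by (meson not_le)
        with elim(2) down[OF that, of q] show False by (meson IntI less_imp_le not_le)
      qed
      then have "Sup S = U \<omega>" using U by (intro cSup_eq_maximum) auto
      with elim(1) show False by simp
    qed
  qed
qed

lemma AE_notin_upset:
  fixes U :: "'a \<Rightarrow> real"
  assumes up: "\<And>x y. x \<in> S \<Longrightarrow> x \<le> y \<Longrightarrow> y \<in> S"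
    and above: "\<And>x. x \<in> S \<Longrightarrow> AE \<omega> in M. U \<omega> \<le> x"
    and no_atom: "\<And>t. AE \<omega> in M. U \<omega> \<noteq> t"
  shows "AE \<omega> in M. U \<omega> \<notin> S"
proof -
  have "AE \<omega> in M. - U \<omega> \<notin> {x. - x \<in> S}"
  proof (rule AE_notin_downset)
    show "y \<in> {x. - x \<in> S}" if "x \<in> {x. - x \<in> S}" "y \<le> x" for x y
      using that up by auto
    show "AE \<omega> in M. x \<le> - U \<omega>" if "x \<in> {x. - x \<in> S}" for x
      using above[of "- x"] that by auto
    show "AE \<omega> in M. - U \<omega> \<noteq> t" for t
      using no_atom[of "- t"] by auto
  qed
  then show ?thesis by simp
qed

lemma AE_jointCDF_strictly_between:
  fixes U V :: "'a \<Rightarrow> real"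
  assumes "prob_space M" and [measurable]: "U \<in> borel_measurable M" "V \<in> borel_measurable M"
    and no_atom: "\<And>t. AE \<omega> in M. U \<omega> \<noteq> t" and V_less: "AE \<omega> in M. V \<omega> < c"
  shows "AE \<omega> in M. 0 < jointCDF M U V (U \<omega>) c \<and> jointCDF M U V (U \<omega>) c < 1"
proof -
  interpret prob_space M by fact
  define p where "p x = jointCDF M U V x c" for x
  have p_mono: "x \<le> y \<Longrightarrow> p x \<le> p y" for x y
    unfolding p_def by (rule jointCDF_mono[OF \<open>prob_space M\<close>]) auto
  have p_bounds: "0 \<le> p x" "p x \<le> 1" for x
    unfolding p_def using jointCDF_nonneg jointCDF_le_1[OF \<open>prob_space M\<close>] by auto
  have p_eq: "p x = \<P>(\<omega> in M. U \<omega> \<le> x \<and> V \<omega> \<le> c)" for x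
    unfolding p_def jointCDF_def ..
  have "AE \<omega> in M. U \<omega> \<notin> {x. p x = 0}"
  proof (rule AE_notin_downset[OF _ _ no_atom])
    show "y \<in> {x. p x = 0}" if "x \<in> {x. p x = 0}" "y \<le> x" for x y
      using that p_mono[of y x] p_bounds(1)[of y] by auto
    show "AE \<omega> in M. x \<le> U \<omega>" if "x \<in> {x. p x = 0}" for x
    proof -
      have "AE \<omega> in M. \<not> (U \<omega> \<le> x \<and> V \<omega> \<le> c)"
        using that unfolding p_eq by (subst (asm) prob_Collect_eq_0) auto
      with V_less show ?thesis by eventually_elim auto
    qed
  qed
  moreover have "AE \<omega> in M. U \<omega> \<notin> {x. p x = 1}"
  proof (rule AE_notin_upset[OF _ _ no_atom])
    show "y \<in> {x. p x = 1}" if "x \<in> {x. p x = 1}" "x \<le> y" for x y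
      using that p_mono[of x y] p_bounds(2)[of y] by auto
    show "AE \<omega> in M. U \<omega> \<le> x" if "x \<in> {x. p x = 1}" for x
    proof -
      have "AE \<omega> in M. U \<omega> \<le> x \<and> V \<omega> \<le> c"
        using that unfolding p_eq by (subst (asm) prob_Collect_eq_1) auto
      then show ?thesis by eventually_elim auto
    qed
  qed
  ultimately show ?thesis
  proof eventually_elim
    case (elim \<omega>)
    with p_bounds[of "U \<omega>"] show ?case by (simp add: p_def less_le)
  qed
qed

definition cpe_section :: "'a measure \<Rightarrow> ('a \<Rightarrow> real) \<Rightarrow> ('a \<Rightarrow> real) \<Rightarrow> real \<Rightarrow> real \<Rightarrow> real"
  where "cpe_section M U V c x =
    (\<integral>y\<in>{0..c}. jointCDF M U V x y * \<bar>ln (jointCDF M U V x y)\<bar> \<partial>lborel)"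

lemma
  assumes P: "prob_space M" and [measurable]: "U \<in> borel_measurable M" "V \<in> borel_measurable M"
    and c: "0 \<le> c"
  shows borel_measurable_cpe_section: "cpe_section M U V c \<in> borel_measurable lborel"
    and cpe_section_nonneg: "0 \<le> cpe_section M U V c x"
    and set_integrable_cpe_section: "set_integrable lborel {0..b} (cpe_section M U V c)"
    and set_integrable_cpe_integrand:
      "set_integrable lborel {0..c} (\<lambda>y. jointCDF M U V x y * \<bar>ln (jointCDF M U V x y)\<bar>)"
proof -
  note [measurable (raw)] = borel_measurable_jointCDF[OF P]
  define h where "h x y = jointCDF M U V x y * \<bar>ln (jointCDF M U V x y)\<bar>" for x y
  have h_bounds: "0 \<le> h x y" "h x y \<le> 1" for x y
    unfolding h_def using mult_abs_ln_le_one[OF jointCDF_nonneg jointCDF_le_1[OF P]]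
    by (simp_all add: jointCDF_nonneg)
  have section_eq: "cpe_section M U V c x = (\<integral>y. indicator {0..c} y * h x y \<partial>lborel)" for x
    unfolding cpe_section_def set_lebesgue_integral_def h_def by simp
  have "(\<lambda>(x, y). indicator {0..c} y * h x y) \<in> borel_measurable (lborel \<Otimes>\<^sub>M lborel)"
    unfolding h_def case_prod_beta by measurable
  then show meas: "cpe_section M U V c \<in> borel_measurable lborel"
    unfolding section_eq[abs_def] by (rule lborel.borel_measurable_lebesgue_integral)
  have integrable_h: "integrable lborel (\<lambda>y. indicator {0..c} y * h x y)" for x
  proof -
    have "h x \<in> borel_measurable lborel" unfolding h_def by measurable
    then show ?thesis
      using integrableI_bounded_set_indicator[of "{0..c}" lborel "h x" 1] h_bounds
      by (simp add: emeasure_lborel_Icc_eq)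
  qed
  show nonneg: "0 \<le> cpe_section M U V c x" for x
    unfolding section_eq using h_bounds by (intro integral_nonneg_AE) (auto simp: indicator_def)
  have "cpe_section M U V c x \<le> (\<integral>y. indicator {0..c} y * 1 \<partial>lborel)" for x
    unfolding section_eq
  proof (rule integral_mono[OF integrable_h])
    show "integrable lborel (\<lambda>y. indicator {0..c} y * 1 :: real)"
      by (simp add: integrable_indicator_iff emeasure_lborel_Icc_eq)
  qed (use h_bounds in \<open>simp add: indicator_def\<close>)
  then have le: "cpe_section M U V c x \<le> c" for x
    using c by simp
  show "set_integrable lborel {0..c} (\<lambda>y. jointCDF M U V x y * \<bar>ln (jointCDF M U V x y)\<bar>)"
    using integrable_h unfolding set_integrable_def h_def by simp
  show "set_integrable lborel {0..b} (cpe_section M U V c)"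
    unfolding set_integrable_def
    by (rule integrableI_bounded_set_indicator[where B=c])
       (use meas nonneg le in \<open>auto simp: emeasure_lborel_Icc_eq\<close>)
qed

lemma cpe_section_pos:
  assumes P: "prob_space M" and [measurable]: "U \<in> borel_measurable M" "V \<in> borel_measurable M"
    and V_less: "AE \<omega> in M. V \<omega> < c" and c: "0 < c"
    and between: "0 < jointCDF M U V x c" "jointCDF M U V x c < 1"
  shows "0 < cpe_section M U V c x"
proof -
  define F where "F y = jointCDF M U V x y" for y
  have F_mono: "y \<le> y' \<Longrightarrow> F y \<le> F y'" for y y'
    unfolding F_def by (rule jointCDF_mono[OF P]) auto
  obtain d where d: "d < c" "0 < F d"
    using jointCDF_pos_below[OF P _ _ V_less between(1)] unfolding F_def by auto
  define d' where "d' = max d 0"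
  have d': "0 \<le> d'" "d' < c" "d \<le> d'" using d c by (auto simp: d'_def)
  define \<delta> where "\<delta> = F d'"
  have \<delta>: "0 < \<delta>" using F_mono[OF d'(3)] d by (simp add: \<delta>_def)
  define \<kappa> where "\<kappa> = \<delta> * - ln (F c)"
  have \<kappa>: "0 < \<kappa>" using \<delta> between by (simp add: \<kappa>_def F_def mult_pos_neg)
  have lower: "indicator {d'..c} y * \<kappa> \<le> indicator {0..c} y * (F y * \<bar>ln (F y)\<bar>)" for y
  proof (cases "y \<in> {d'..c}")
    case True
    then have "\<delta> \<le> F y" "F y \<le> F c" using F_mono by (auto simp: \<delta>_def)
    then have "0 < F y" using \<delta> by simp
    with \<open>F y \<le> F c\<close> have "ln (F y) \<le> ln (F c)" by simp
    then have "- ln (F c) \<le> \<bar>ln (F y)\<bar>" by linarith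
    moreover have "0 \<le> - ln (F c)" using between by (simp add: F_def)
    ultimately have "\<delta> * - ln (F c) \<le> F y * \<bar>ln (F y)\<bar>"
      using \<open>\<delta> \<le> F y\<close> \<delta> by (intro mult_mono) auto
    then show ?thesis using True d' by (simp add: \<kappa>_def indicator_def)
  next
    case False
    then show ?thesis using jointCDF_nonneg[of M U V x y] by (simp add: indicator_def F_def)
  qed
  have "0 < \<kappa> * (c - d')" using \<kappa> d' by simp
  also have "\<dots> = (\<integral>y. indicator {d'..c} y * \<kappa> \<partial>lborel)"
    using d' by simp
  also have "\<dots> \<le> (\<integral>y. indicator {0..c} y * (F y * \<bar>ln (F y)\<bar>) \<partial>lborel)"
  proof (rule integral_mono[OF _ _ lower])
    show "integrable lborel (\<lambda>y. indicator {d'..c} y * \<kappa>)"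
      by (simp add: integrable_indicator_iff emeasure_lborel_Icc_eq)
    show "integrable lborel (\<lambda>y. indicator {0..c} y * (F y * \<bar>ln (F y)\<bar>))"
      using set_integrable_cpe_integrand[OF P _ _ less_imp_le[OF c], where x=x]
      unfolding set_integrable_def F_def by simp
  qed
  finally show ?thesis unfolding cpe_section_def set_lebesgue_integral_def F_def by simp
qed

lemma set_integral_Icc_Icc_swap:
  fixes k :: "real \<Rightarrow> real \<Rightarrow> real"
  assumes [measurable]: "(\<lambda>(x, y). k x y) \<in> borel_measurable (lborel \<Otimes>\<^sub>M lborel)"
    and bounded: "\<And>x y. \<bar>k x y\<bar> \<le> B"
  shows "(\<integral>x\<in>{a..b}. (\<integral>y\<in>{c..d}. k x y \<partial>lborel) \<partial>lborel)
       = (\<integral>y\<in>{c..d}. (\<integral>x\<in>{a..b}. k x y \<partial>lborel) \<partial>lborel)"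
proof -
  define K where "K x y = indicator {a..b} x * indicator {c..d} y * k x y" for x y :: real
  have [measurable]: "(\<lambda>(x, y). K x y) \<in> borel_measurable (lborel \<Otimes>\<^sub>M lborel)"
    unfolding K_def by measurable
  have "integrable (lborel \<Otimes>\<^sub>M lborel) (\<lambda>(x, y). K x y)"
  proof (rule integrableI_bounded_set[where A="{a..b} \<times> {c..d}" and B=B])
    show "emeasure (lborel \<Otimes>\<^sub>M lborel) ({a..b} \<times> {c..d}) < \<infinity>"
      by (simp add: lborel.emeasure_pair_measure_Times ennreal_mult_less_top emeasure_lborel_Icc_eq)
    show "AE z in lborel \<Otimes>\<^sub>M lborel. z \<in> {a..b} \<times> {c..d} \<longrightarrow> norm (case z of (x, y) \<Rightarrow> K x y) \<le> B"
      using bounded by (auto simp: K_def indicator_def)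
    show "AE z in lborel \<Otimes>\<^sub>M lborel. z \<notin> {a..b} \<times> {c..d} \<longrightarrow> (case z of (x, y) \<Rightarrow> K x y) = 0"
      by (auto simp: K_def indicator_def mem_Times_iff)
  qed simp_all
  then have "(\<integral>y. (\<integral>x. K x y \<partial>lborel) \<partial>lborel) = (\<integral>x. (\<integral>y. K x y \<partial>lborel) \<partial>lborel)"
    by (rule lborel_pair.Fubini_integral)
  then show ?thesis
    unfolding set_lebesgue_integral_def K_def
    by (simp add: integral_mult_right_zero[symmetric] mult.assoc mult.left_commute
        del: integral_mult_right_zero)
qed

lemma bcpe_eq_set_integral_cpe_section:
  assumes P: "prob_space M" and [measurable]: "X1 \<in> borel_measurable M" "X2 \<in> borel_measurable M"
  shows "bcpe M X1 X2 b1 b2 = (\<integral>x\<in>{0..b1}. cpe_section M X1 X2 b2 x \<partial>lborel)"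
    and "bcpe M X1 X2 b1 b2 = (\<integral>y\<in>{0..b2}. cpe_section M X2 X1 b1 y \<partial>lborel)"
proof -
  note [measurable (raw)] = borel_measurable_jointCDF[OF P]
  define F where "F = jointCDF M X1 X2"
  have F_bounds: "0 \<le> F x y" "F x y \<le> 1" for x y
    unfolding F_def by (simp_all add: jointCDF_nonneg jointCDF_le_1[OF P])
  then have "ln (F x y) \<le> 0" for x y
    by (cases "F x y = 0") (simp_all add: less_le)
  then have "F x y * ln (F x y) = - (F x y * \<bar>ln (F x y)\<bar>)" for x y
    by simp
  then show first: "bcpe M X1 X2 b1 b2 = (\<integral>x\<in>{0..b1}. cpe_section M X1 X2 b2 x \<partial>lborel)"
    unfolding bcpe_def cpe_section_def F_def[symmetric] set_lebesgue_integral_def by simp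
  have "(\<lambda>(x, y). F x y * \<bar>ln (F x y)\<bar>) \<in> borel_measurable (lborel \<Otimes>\<^sub>M lborel)"
    unfolding F_def case_prod_beta by measurable
  moreover have "\<bar>F x y * \<bar>ln (F x y)\<bar>\<bar> \<le> 1" for x y
    using mult_abs_ln_le_one[OF F_bounds] F_bounds(1) by simp
  ultimately show "bcpe M X1 X2 b1 b2 = (\<integral>y\<in>{0..b2}. cpe_section M X2 X1 b1 y \<partial>lborel)"
    unfolding first cpe_section_def jointCDF_swap[of M X2 X1] F_def[symmetric]
    by (rule set_integral_Icc_Icc_swap)
qed

text \<open>
  Gibbs' inequality for \<open>f\<close> against the density \<open>g / I\<close> on \<open>A\<close>, \<open>I = \<integral>\<^sub>A g\<close>:
  integrate \<open>f ln (g / (I f)) \<le> g / I - f\<close>.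
\<close>
lemma exp_expectation_ln_mult_exp_entropy_le:
  fixes X :: "'a \<Rightarrow> real" and f g :: "real \<Rightarrow> real"
  assumes "prob_space M" and f_nonneg: "\<And>x. 0 \<le> f x"
    and distr: "distributed M lborel X (\<lambda>x. ennreal (f x))"
    and [measurable]: "g \<in> borel_measurable borel" "A \<in> sets borel"
    and g_nonneg: "\<And>x. x \<in> A \<Longrightarrow> 0 \<le> g x" and g_int: "set_integrable lborel A g"
    and supp: "AE \<omega> in M. X \<omega> \<in> A \<and> 0 < g (X \<omega>)"
    and H_fin: "integrable lborel (\<lambda>x. f x * ln (f x))"
    and E_fin: "integrable M (\<lambda>\<omega>. ln (g (X \<omega>)))"
  shows "exp (\<integral>\<omega>. ln (g (X \<omega>)) \<partial>M) * exp (diff_entropy f) \<le> (\<integral>x\<in>A. g x \<partial>lborel)"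
proof -
  interpret prob_space M by fact
  have [measurable]: "X \<in> borel_measurable M" using distr by (simp add: distributed_def)
  define I where "I = (\<integral>x\<in>A. g x \<partial>lborel)"
  define G where "G x = indicator A x * g x" for x
  have G_int: "integrable lborel G" using g_int unfolding G_def set_integrable_def by simp
  have I_eq: "I = integral\<^sup>L lborel G" unfolding I_def G_def set_lebesgue_integral_def by simp
  have E_eq: "(\<integral>\<omega>. ln (g (X \<omega>)) \<partial>M) = (\<integral>x. f x * ln (g x) \<partial>lborel)"
    using distributed_integral[OF distr, of "\<lambda>x. ln (g x)"] f_nonneg by simp
  have fg_int: "integrable lborel (\<lambda>x. f x * ln (g x))"
    using distributed_integrable[OF distr, of "\<lambda>x. ln (g x)"] f_nonneg E_fin by simp
  have f_int: "integrable lborel f"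
    using distributed_integrable[OF distr, of "\<lambda>x. 1"] f_nonneg by simp
  have f_total: "(\<integral>x. f x \<partial>lborel) = 1"
    using distributed_integral[OF distr, of "\<lambda>x. 1"] f_nonneg by (simp add: prob_space)
  have supp_f: "AE x in lborel. 0 < f x \<longrightarrow> x \<in> A \<and> 0 < g x"
  proof -
    have "AE x in distr M lborel X. x \<in> A \<and> 0 < g x"
      using supp by (subst AE_distr_iff) (auto simp del: AE_conj_iff)
    then have "AE x in density lborel (\<lambda>x. ennreal (f x)). x \<in> A \<and> 0 < g x"
      using distributed_distr_eq_density[OF distr] by metis
    moreover have "(\<lambda>x. ennreal (f x)) \<in> borel_measurable lborel"
      using distr by (simp add: distributed_def)
    ultimately show ?thesis by (subst (asm) AE_density) auto
  qed
  have I_pos: "0 < I"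
  proof -
    have "0 \<le> I" unfolding I_eq G_def using g_nonneg
      by (intro integral_nonneg_AE) (auto simp: indicator_def)
    moreover have "I \<noteq> 0"
    proof
      assume "I = 0"
      then have "AE x in lborel. G x = 0"
        using integral_nonneg_eq_0_iff_AE[OF G_int] g_nonneg unfolding I_eq G_def
        by (auto simp: indicator_def)
      with supp_f have "AE x in lborel. f x = 0"
        by eventually_elim (use f_nonneg in \<open>auto simp: G_def less_le\<close>)
      then have "(\<integral>x. f x \<partial>lborel) = 0" by (simp add: integral_eq_zero_AE)
      with f_total show False by simp
    qed
    ultimately show ?thesis by simp
  qed
  have "AE x in lborel. f x * ln (g x) - f x * ln (f x) \<le> f x * ln I + G x / I - f x"
    using supp_f
  proof eventually_elim
    case (elim x)
    show ?case
    proof (cases "f x = 0")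
      case True
      then show ?thesis using g_nonneg I_pos by (simp add: G_def indicator_def)
    next
      case False
      then have f: "0 < f x" using f_nonneg[of x] by linarith
      with elim have g: "0 < g x" and "x \<in> A" by auto
      have "ln (g x) - ln I - ln (f x) = ln (g x / (I * f x))"
        using g f I_pos by (simp add: ln_div ln_mult)
      also have "\<dots> \<le> g x / (I * f x) - 1"
        using g f I_pos by (intro ln_le_minus_one) auto
      finally have "f x * (ln (g x) - ln (f x)) \<le> f x * (ln I + g x / (I * f x) - 1)"
        using f by (intro mult_left_mono) auto
      then show ?thesis using f I_pos \<open>x \<in> A\<close> by (simp add: G_def algebra_simps)
    qed
  qed
  then have "(\<integral>x. f x * ln (g x) - f x * ln (f x) \<partial>lborel)
      \<le> (\<integral>x. f x * ln I + G x / I - f x \<partial>lborel)"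
    using fg_int H_fin f_int G_int by (intro integral_mono_AE) auto
  also have "\<dots> = ln I"
    using f_int G_int f_total I_pos by (simp add: I_eq[symmetric])
  finally have "(\<integral>\<omega>. ln (g (X \<omega>)) \<partial>M) + diff_entropy f \<le> ln I"
    using fg_int H_fin unfolding E_eq diff_entropy_def by simp
  then have "exp ((\<integral>\<omega>. ln (g (X \<omega>)) \<partial>M) + diff_entropy f) \<le> exp (ln I)" by simp
  then show ?thesis using I_pos by (simp add: exp_add I_def)
qed

lemma exp_expectation_ln_cpe_section_mult_exp_entropy_le:
  fixes U V :: "'a \<Rightarrow> real"
  assumes P: "prob_space M" and f_nonneg: "\<And>x. 0 \<le> f x"
    and distr: "distributed M lborel U (\<lambda>x. ennreal (f x))"
    and Vm: "V \<in> borel_measurable M"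
    and supp: "AE \<omega> in M. U \<omega> \<in> {0..b} \<and> V \<omega> < c" and c: "0 < c"
    and H_fin: "integrable lborel (\<lambda>x. f x * ln (f x))"
    and E_fin: "integrable M (\<lambda>\<omega>. ln (cpe_section M U V c (U \<omega>)))"
  shows "exp (\<integral>\<omega>. ln (cpe_section M U V c (U \<omega>)) \<partial>M) * exp (diff_entropy f)
       \<le> (\<integral>x\<in>{0..b}. cpe_section M U V c x \<partial>lborel)"
proof (rule exp_expectation_ln_mult_exp_entropy_le[OF P f_nonneg distr _ _ _ _ _ H_fin E_fin])
  have Um: "U \<in> borel_measurable M" using distr by (simp add: distributed_def)
  note section_props = borel_measurable_cpe_section cpe_section_nonneg set_integrable_cpe_section
  show "cpe_section M U V c \<in> borel_measurable borel"
    using section_props(1)[OF P Um Vm less_imp_le[OF c]] by simp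
  show "0 \<le> cpe_section M U V c x" for x
    using section_props(2)[OF P Um Vm less_imp_le[OF c]] by simp
  show "set_integrable lborel {0..b} (cpe_section M U V c)"
    using section_props(3)[OF P Um Vm less_imp_le[OF c]] by simp
  have V_less: "AE \<omega> in M. V \<omega> < c" using supp by eventually_elim simp
  with supp AE_jointCDF_strictly_between[OF P Um Vm distributed_AE_neq[OF distr] V_less]
  show "AE \<omega> in M. U \<omega> \<in> {0..b} \<and> 0 < cpe_section M U V c (U \<omega>)"
    by eventually_elim (use cpe_section_pos[OF P Um Vm V_less c] in blast)
qed simp

theorem mainTheorem3:
  fixes M :: "'a measure" and X1 X2 :: "'a \<Rightarrow> real"
    and fj :: "real \<times> real \<Rightarrow> real" and f1 f2 :: "real \<Rightarrow> real" and b1 b2 :: real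
  assumes "prob_space M"
    and "b1 > 0" and "b2 > 0"
    and "\<And>x. fj x \<ge> 0" and "\<And>x. f1 x \<ge> 0" and "\<And>x. f2 x \<ge> 0"
    and joint: "distributed M lborel (\<lambda>\<omega>. (X1 \<omega>, X2 \<omega>)) (\<lambda>x. ennreal (fj x))"
    and marg1: "distributed M lborel X1 (\<lambda>x. ennreal (f1 x))"
    and marg2: "distributed M lborel X2 (\<lambda>x. ennreal (f2 x))"
    and supp: "AE \<omega> in M. 0 < X1 \<omega> \<and> X1 \<omega> < b1 \<and> 0 < X2 \<omega> \<and> X2 \<omega> < b2"
    and fin_H1: "integrable lborel (\<lambda>x. f1 x * ln (f1 x))"
    and fin_H2: "integrable lborel (\<lambda>x. f2 x * ln (f2 x))"
    and fin_C1: "integrable M (\<lambda>\<omega>. ln (\<integral>x2\<in>{0..b2}.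
        jointCDF M X1 X2 (X1 \<omega>) x2 * \<bar>ln (jointCDF M X1 X2 (X1 \<omega>) x2)\<bar> \<partial>lborel))"
    and fin_C2: "integrable M (\<lambda>\<omega>. ln (\<integral>x1\<in>{0..b1}.
        jointCDF M X1 X2 x1 (X2 \<omega>) * \<bar>ln (jointCDF M X1 X2 x1 (X2 \<omega>))\<bar> \<partial>lborel))"
  shows "bcpe M X1 X2 b1 b2 \<ge>
    max (exp (\<integral>\<omega>. ln (\<integral>x2\<in>{0..b2}.
              jointCDF M X1 X2 (X1 \<omega>) x2 * \<bar>ln (jointCDF M X1 X2 (X1 \<omega>) x2)\<bar> \<partial>lborel) \<partial>M)
           * exp (diff_entropy f1))
        (exp (\<integral>\<omega>. ln (\<integral>x1\<in>{0..b1}.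
              jointCDF M X1 X2 x1 (X2 \<omega>) * \<bar>ln (jointCDF M X1 X2 x1 (X2 \<omega>))\<bar> \<partial>lborel) \<partial>M)
           * exp (diff_entropy f2))"
proof -
  note P = \<open>prob_space M\<close>
  have X1m: "X1 \<in> borel_measurable M" and X2m: "X2 \<in> borel_measurable M"
    using marg1 marg2 by (simp_all add: distributed_def)
  have supp1: "AE \<omega> in M. X1 \<omega> \<in> {0..b1} \<and> X2 \<omega> < b2"
    and supp2: "AE \<omega> in M. X2 \<omega> \<in> {0..b2} \<and> X1 \<omega> < b1"
    using supp by (eventually_elim, simp)+
  note bound = exp_expectation_ln_cpe_section_mult_exp_entropy_le[OF P]
  have "exp (\<integral>\<omega>. ln (cpe_section M X1 X2 b2 (X1 \<omega>)) \<partial>M) * exp (diff_entropy f1)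
      \<le> bcpe M X1 X2 b1 b2"
    using bound[OF assms(5) marg1 X2m supp1 \<open>b2 > 0\<close> fin_H1] fin_C1
    unfolding bcpe_eq_set_integral_cpe_section(1)[OF P X1m X2m] cpe_section_def by simp
  moreover have "exp (\<integral>\<omega>. ln (cpe_section M X2 X1 b1 (X2 \<omega>)) \<partial>M) * exp (diff_entropy f2)
      \<le> bcpe M X1 X2 b1 b2"
    using bound[OF assms(6) marg2 X1m supp2 \<open>b1 > 0\<close> fin_H2] fin_C2
    unfolding bcpe_eq_set_integral_cpe_section(2)[OF P X1m X2m] cpe_section_def jointCDF_swap[of M X2 X1]
    by simp
  ultimately show ?thesis
    unfolding cpe_section_def jointCDF_swap[of M X2 X1] by simp
qed

end
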